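(* For $n\ge0$ and $0\le x<s^n$ with base-$s$ expansion $x=x_0+x_1s+\dots+x_{n-1}s^{n-1}$ ($0\le x_k<s$) put $S_{(n,x)}=S_{x_0}S_{x_1}\cdots S_{x_{n-1}}$ and $u_{(n,x)}=u_{x_0}u_{x_1}\cdots u_{x_{n-1}}$ (empty products equal $I$). Then for all $n,m\ge0$, $0\le x<s^n$, $0\le y<s^m$: if $x=\varphi(j,x')$ and $y=\varphi(l,y')$ for some $(j,x'),(l,y')\in\mathcal V$, then $$T_S(u_{(n,x)}u_{(m,y)}^* )=S_{(n,x)}S_{(m,y)}^*+C_{(n,x),(m,y)},$$ where $C_{(n,x),(m,y)}$ is the rank-one operator with $C_{(n,x),(m,y)}E_{(k,z)}=E_{(j,x')}$ if $(k,z)=(l,y')$ and $C_{(n,x),(m,y)}E_{(k,z)}=0$ otherwise; and if $x$ or $y$ is not in the range of $\varphi$, then $T_S(u_{(n,x)}u_{(m,y)}^* )=S_{(n,x)}S_{(m,y)}^*$.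
   Context: Fix an integer $s\ge2$. Let $\mathcal V=\{(n,x): n\in\mathbb Z_{\ge0},\ x\in\mathbb Z,\ 0\le x<s^n\}$, $H=\ell^2(\mathcal V)$ with orthonormal basis $\{E_{(n,x)}\}$. $S_j$ ($0\le j\le s-1$) are the isometries on $H$ given by $S_jE_{(n,x)}=E_{(n+1,sx+j)}$. On $\ell^2(\mathbb Z)$ with standard basis $\{e_l\}_{l\in\mathbb Z}$, define isometries $u_je_l=e_{sl+j}$, $j=0,\dots,s-1$ (these satisfy the Cuntz relations $u_j^*u_k=\delta_{jk}$, $\sum_ju_ju_j^*=I$). Let $\varphi:\mathcal V\to\mathbb Z$, $\varphi(n,x)=s^n+x$ (injective), let $\iota:H\to\ell^2(\mathbb Z)$ be the isometry $\iota E_{(n,x)}=e_{\varphi(n,x)}$, and define $T_S:B(\ell^2(\mathbb Z))\to B(H)$ by $T_S(a)=\iota^*a\iota$. *)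

theory Defs
  imports "HOL-Analysis.Analysis"
begin

text \<open>Vectors of l2(X) are represented as functions X \<Rightarrow> complex; operators act on such
functions. The vertex set V is carved out of nat \<times> int.\<close>

definition Vset :: "nat \<Rightarrow> (nat \<times> int) set" where
  "Vset s = {(n, x). 0 \<le> x \<and> x < int s ^ n}"

definition l2 :: "'a set \<Rightarrow> ('a \<Rightarrow> complex) set" where
  "l2 I = {f. (\<forall>p. p \<notin> I \<longrightarrow> f p = 0) \<and> (\<lambda>p. (norm (f p))^2) summable_on I}"

definition delta :: "'a \<Rightarrow> 'a \<Rightarrow> complex" where
  "delta p = (\<lambda>q. if q = p then 1 else 0)"

text \<open>Hilbert-space adjoint of an operator A : l2(I) \<rightarrow> l2(J), computed via
  (A* g)(p) = < A e_p , g >.\<close>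
definition adj :: "'a set \<Rightarrow> 'b set \<Rightarrow> (('a \<Rightarrow> complex) \<Rightarrow> ('b \<Rightarrow> complex))
                     \<Rightarrow> ('b \<Rightarrow> complex) \<Rightarrow> ('a \<Rightarrow> complex)" where
  "adj I J A g = (\<lambda>p. if p \<in> I then infsum (\<lambda>q. cnj (A (delta p) q) * g q) J else 0)"

text \<open>S_j E_(n,x) = E_(n+1, s x + j), written out on coefficient functions.\<close>
definition Sop :: "nat \<Rightarrow> nat \<Rightarrow> ((nat \<times> int) \<Rightarrow> complex) \<Rightarrow> ((nat \<times> int) \<Rightarrow> complex)" where
  "Sop s j f = (\<lambda>(n, x). if (n, x) \<in> Vset s \<and> 0 < n \<and> x mod int s = int j
                          then f (n - 1, x div int s) else 0)"

text \<open>u_j e_l = e_(s l + j).\<close>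
definition uop :: "nat \<Rightarrow> nat \<Rightarrow> (int \<Rightarrow> complex) \<Rightarrow> (int \<Rightarrow> complex)" where
  "uop s j f = (\<lambda>l. if l mod int s = int j then f (l div int s) else 0)"

definition phi :: "nat \<Rightarrow> nat \<times> int \<Rightarrow> int" where
  "phi s p = int s ^ fst p + snd p"

text \<open>iota E_p = e_(phi p).\<close>
definition iota :: "nat \<Rightarrow> ((nat \<times> int) \<Rightarrow> complex) \<Rightarrow> (int \<Rightarrow> complex)" where
  "iota s f = (\<lambda>l. if \<exists>p\<in>Vset s. phi s p = l
                    then f (THE p. p \<in> Vset s \<and> phi s p = l) else 0)"

definition TS :: "nat \<Rightarrow> ((int \<Rightarrow> complex) \<Rightarrow> (int \<Rightarrow> complex))
                    \<Rightarrow> ((nat \<times> int) \<Rightarrow> complex) \<Rightarrow> ((nat \<times> int) \<Rightarrow> complex)" where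
  "TS s a = adj (Vset s) UNIV (iota s) \<circ> a \<circ> iota s"

definition digit :: "nat \<Rightarrow> int \<Rightarrow> nat \<Rightarrow> nat" where
  "digit s x k = nat ((x div int s ^ k) mod int s)"

definition Sword :: "nat \<Rightarrow> nat \<Rightarrow> int \<Rightarrow> ((nat \<times> int) \<Rightarrow> complex) \<Rightarrow> ((nat \<times> int) \<Rightarrow> complex)" where
  "Sword s n x = foldr (\<circ>) (map (\<lambda>k. Sop s (digit s x k)) [0..<n]) id"

definition uword :: "nat \<Rightarrow> nat \<Rightarrow> int \<Rightarrow> (int \<Rightarrow> complex) \<Rightarrow> (int \<Rightarrow> complex)" where
  "uword s n x = foldr (\<circ>) (map (\<lambda>k. uop s (digit s x k)) [0..<n]) id"

text \<open>Rank-one operator E_q \<mapsto> E_p, E_r \<mapsto> 0 for r \<noteq> q.\<close>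
definition Cop :: "'a \<Rightarrow> 'a \<Rightarrow> ('a \<Rightarrow> complex) \<Rightarrow> ('a \<Rightarrow> complex)" where
  "Cop p q f = (\<lambda>r. if r = p then f q else 0)"

end

theory Submission
  imports Defs
begin

text \<open>All operators involved send basis vectors to basis vectors, so each adjoint is
  evaluated through the point a basis vector is sent to.  At a point \<open>L\<close>, \<open>u_(n,x) g\<close>
  compares the \<open>n\<close> lowest base-\<open>s\<close> digits of \<open>L\<close> with \<open>x\<close> and reads \<open>g\<close> at \<open>L\<close> with
  these digits removed; \<open>S_(n,x)\<close> does the same at \<open>(k, z)\<close>, provided \<open>n \<le> k\<close>.  As
  \<open>phi (k, z) = s^k + z\<close>, for \<open>n \<le> k\<close> both tests agree and the remaining points
  correspond under \<open>phi\<close>.  For \<open>k < n\<close> we have \<open>phi (k, z) < s^n\<close>: then \<open>S_(n,x)\<close> gives 0,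
  while \<open>u_(n,x)\<close> fires exactly when \<open>phi (k, z) = x\<close>, reading \<open>u_(m,y)* \<iota> f\<close> at 0, which is
  \<open>(\<iota> f) y\<close>.  This is the rank-one correction.\<close>

lemma infsum_delta_mult:
  fixes g :: "'a \<Rightarrow> complex"
  shows "infsum (\<lambda>q. delta p q * g q) A = (if p \<in> A then g p else 0)"
proof -
  have "infsum (\<lambda>q. delta p q * g q) A = infsum (\<lambda>q. delta p q * g q) (A \<inter> {p})"
    by (rule infsum_cong_neutral) (auto simp: delta_def)
  then show ?thesis
    by (cases "p \<in> A") (auto simp: delta_def)
qed

lemma adj_apply_of_delta:
  assumes "p \<in> I" and "A (delta p) = delta q"
  shows "adj I J A g p = (if q \<in> J then g q else 0)"
proof -
  have "cnj (delta q r) = delta q r" for r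
    by (simp add: delta_def)
  then show ?thesis
    using assms by (simp add: adj_def infsum_delta_mult)
qed

subsection \<open>Base-\<open>s\<close> digits\<close>

lemma int_div_less_of_less_mult:
  fixes z N M :: int
  assumes "0 < N" and "z < N * M"
  shows "z div N < M"
proof -
  have "N * (z div N) \<le> z"
    using minus_mod_eq_mult_div[of z N] pos_mod_sign[OF assms(1), of z] by linarith
  then show ?thesis
    using assms by (smt (verit) mult_less_cancel_left_pos)
qed

lemma mod_div_eq_iff:
  fixes q d y L :: int
  assumes "0 < d" and "0 \<le> y" and "y < d"
  shows "q mod d = y \<and> q div d = L \<longleftrightarrow> q = d * L + y"
  using assms by (auto simp: mult.commute)

lemma mod_mult_eq_iff:
  fixes L x N M :: int
  assumes "0 < N" and "0 \<le> x" and "x < N * M"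
  shows "L mod (N * M) = x \<longleftrightarrow> L mod N = x mod N \<and> L div N mod M = x div N"
proof -
  have "0 < M"
    using assms by (smt (verit) mult_nonneg_nonpos)
  then have L_split: "L mod (N * M) = N * (L div N mod M) + L mod N"
    by (simp add: zmod_zmult2_eq)
  have bounds: "0 \<le> L mod N" "L mod N < N"
    using assms(1) by auto
  show ?thesis
  proof
    assume "L mod (N * M) = x"
    then show "L mod N = x mod N \<and> L div N mod M = x div N"
      using L_split bounds by auto
  next
    assume "L mod N = x mod N \<and> L div N mod M = x div N"
    then show "L mod (N * M) = x"
      using L_split by (metis mult_div_mod_eq)
  qed
qed

lemma digit_Suc: "digit s x (Suc k) = digit s (x div int s) k"
  unfolding digit_def by (simp add: zdiv_zmult2_eq power_Suc)

lemma uword_Suc: "uword s (Suc n) x = uop s (digit s x 0) \<circ> uword s n (x div int s)"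
  unfolding uword_def
  by (simp add: upt_conv_Cons map_Suc_upt[symmetric] digit_Suc comp_def del: upt_Suc)

lemma Sword_Suc: "Sword s (Suc n) x = Sop s (digit s x 0) \<circ> Sword s n (x div int s)"
  unfolding Sword_def
  by (simp add: upt_conv_Cons map_Suc_upt[symmetric] digit_Suc comp_def del: upt_Suc)

subsection \<open>The words \<open>u_(n,x)\<close> and \<open>S_(n,x)\<close>\<close>

lemma uword_apply:
  assumes "0 < s" and "0 \<le> x" and "x < int s ^ n"
  shows "uword s n x g L = (if L mod int s ^ n = x then g (L div int s ^ n) else 0)"
  using assms(2,3)
proof (induction n arbitrary: x L)
  case 0
  then show ?case by (simp add: uword_def)
next
  case (Suc n)
  have s0: "0 < int s"
    using assms(1) by simp
  have x_div: "0 \<le> x div int s" "x div int s < int s ^ n"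
    using Suc.prems s0 int_div_less_of_less_mult[of "int s" x] by (auto simp: pos_imp_zdiv_nonneg_iff)
  have "uword s (Suc n) x g L
      = (if L mod int s = x mod int s then uword s n (x div int s) g (L div int s) else 0)"
    using s0 Suc.prems by (simp add: uword_Suc uop_def digit_def)
  also have "\<dots> = (if L mod int s ^ Suc n = x then g (L div int s ^ Suc n) else 0)"
    using Suc.IH[OF x_div] mod_mult_eq_iff[of "int s" x "int s ^ n" L] s0 Suc.prems
    by (auto simp: zdiv_zmult2_eq)
  finally show ?case .
qed

lemma uword_delta:
  assumes "0 < s" and "0 \<le> y" and "y < int s ^ m"
  shows "uword s m y (delta L) = delta (int s ^ m * L + y)"
proof
  fix q
  show "uword s m y (delta L) q = delta (int s ^ m * L + y) q"
    using uword_apply[OF assms] mod_div_eq_iff[of "int s ^ m" y q L] assms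
    by (auto simp: delta_def)
qed

lemma adj_uword_apply:
  assumes "0 < s" and "0 \<le> y" and "y < int s ^ m"
  shows "adj UNIV UNIV (uword s m y) h L = h (int s ^ m * L + y)"
  by (simp add: adj_apply_of_delta uword_delta[OF assms])

lemma Sword_apply:
  assumes "0 < s" and "0 \<le> x" and "x < int s ^ n" and "(K, Z) \<in> Vset s"
  shows "Sword s n x h (K, Z)
       = (if n \<le> K \<and> Z mod int s ^ n = x then h (K - n, Z div int s ^ n) else 0)"
  using assms(2-4)
proof (induction n arbitrary: x K Z)
  case 0
  then show ?case by (simp add: Sword_def)
next
  case (Suc n)
  have s0: "0 < int s"
    using assms(1) by simp
  have x_div: "0 \<le> x div int s" "x div int s < int s ^ n"
    using Suc.prems s0 int_div_less_of_less_mult[of "int s" x] by (auto simp: pos_imp_zdiv_nonneg_iff)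
  show ?case
  proof (cases K)
    case 0
    then show ?thesis by (simp add: Sword_Suc Sop_def)
  next
    case (Suc K')
    have "0 \<le> Z" "Z < int s * int s ^ K'"
      using Suc.prems(3) \<open>K = Suc K'\<close> by (auto simp: Vset_def)
    then have V: "(K', Z div int s) \<in> Vset s"
      using s0 int_div_less_of_less_mult[of "int s" Z] by (auto simp: Vset_def pos_imp_zdiv_nonneg_iff)
    have "Sword s (Suc n) x h (K, Z)
        = (if Z mod int s = x mod int s then Sword s n (x div int s) h (K', Z div int s) else 0)"
      using s0 Suc.prems(3) \<open>K = Suc K'\<close> by (simp add: Sword_Suc Sop_def digit_def)
    also have "\<dots> = (if Suc n \<le> K \<and> Z mod int s ^ Suc n = x
                     then h (K - Suc n, Z div int s ^ Suc n) else 0)"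
      using Suc.IH[OF x_div V] mod_mult_eq_iff[of "int s" x "int s ^ n" Z] s0 Suc.prems \<open>K = Suc K'\<close>
      by (auto simp: zdiv_zmult2_eq)
    finally show ?thesis .
  qed
qed

lemma Sword_outside_Vset:
  assumes "\<And>r. r \<notin> Vset s \<Longrightarrow> h r = 0" and "r \<notin> Vset s"
  shows "Sword s n x h r = 0"
proof (cases n)
  case 0
  then show ?thesis using assms by (simp add: Sword_def)
next
  case (Suc k)
  then show ?thesis using assms(2) by (cases r) (simp add: Sword_Suc Sop_def)
qed

lemma Vset_append_digits:
  assumes "0 < s" and "0 \<le> y" and "y < int s ^ m" and "(a, b) \<in> Vset s"
  shows "(m + a, int s ^ m * b + y) \<in> Vset s"
proof -
  have b: "0 \<le> b" "b + 1 \<le> int s ^ a"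
    using assms(4) by (auto simp: Vset_def)
  have "int s ^ m * b + y < int s ^ m * (b + 1)"
    using assms(3) by (simp add: algebra_simps)
  also have "\<dots> \<le> int s ^ m * int s ^ a"
    using b by (intro mult_left_mono) auto
  finally show ?thesis
    using assms b by (simp add: Vset_def power_add)
qed

lemma Vset_drop_digits:
  assumes "0 < s" and "(K, Z) \<in> Vset s" and "n \<le> K"
  shows "(K - n, Z div int s ^ n) \<in> Vset s"
proof -
  have "Z < int s ^ n * int s ^ (K - n)"
    using assms(2,3) by (simp add: Vset_def flip: power_add)
  then show ?thesis
    using assms(1,2) int_div_less_of_less_mult[of "int s ^ n" Z]
    by (auto simp: Vset_def pos_imp_zdiv_nonneg_iff)
qed

lemma Sword_delta:
  assumes "0 < s" and "0 \<le> y" and "y < int s ^ m" and "(a, b) \<in> Vset s"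
  shows "Sword s m y (delta (a, b)) = delta (m + a, int s ^ m * b + y)"
proof
  fix r
  show "Sword s m y (delta (a, b)) r = delta (m + a, int s ^ m * b + y) r"
  proof (cases "r \<in> Vset s")
    case True
    obtain K Z where r: "r = (K, Z)"
      by fastforce
    have "(m \<le> K \<and> Z mod int s ^ m = y \<and> (K - m, Z div int s ^ m) = (a, b))
          \<longleftrightarrow> (K, Z) = (m + a, int s ^ m * b + y)"
      using mod_div_eq_iff[of "int s ^ m" y Z b] assms by auto
    then show ?thesis
      using Sword_apply[OF assms(1-3)] True r by (auto simp: delta_def)
  next
    case False
    have "Sword s m y (delta (a, b)) r = 0"
      using False assms(4) by (intro Sword_outside_Vset) (auto simp: delta_def)
    moreover have "r \<noteq> (m + a, int s ^ m * b + y)"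
      using False Vset_append_digits[OF assms] by auto
    ultimately show ?thesis
      by (simp add: delta_def)
  qed
qed

lemma adj_Sword_apply:
  assumes "0 < s" and "0 \<le> y" and "y < int s ^ m" and "(a, b) \<in> Vset s"
  shows "adj (Vset s) (Vset s) (Sword s m y) f (a, b) = f (m + a, int s ^ m * b + y)"
  using assms by (simp add: adj_apply_of_delta Sword_delta Vset_append_digits)

lemma Sword_adj_Sword_apply:
  assumes "0 < s" and "(n, x) \<in> Vset s" and "(m, y) \<in> Vset s" and "(K, Z) \<in> Vset s"
  shows "(Sword s n x \<circ> adj (Vset s) (Vset s) (Sword s m y)) f (K, Z)
       = (if n \<le> K \<and> Z mod int s ^ n = x
          then f (m + (K - n), int s ^ m * (Z div int s ^ n) + y) else 0)"
  using assms Sword_apply[of s x n K Z] adj_Sword_apply[of s y m] Vset_drop_digits[OF assms(1,4)]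
  by (auto simp: Vset_def)

subsection \<open>The embedding \<open>\<iota>\<close>\<close>

lemma phi_bounds:
  assumes "2 \<le> s" and "(a, b) \<in> Vset s"
  shows "int s ^ a \<le> phi s (a, b)" and "phi s (a, b) < int s ^ Suc a"
proof -
  show "int s ^ a \<le> phi s (a, b)"
    using assms by (simp add: phi_def Vset_def)
  have "phi s (a, b) < 2 * int s ^ a"
    using assms by (simp add: phi_def Vset_def)
  also have "\<dots> \<le> int s * int s ^ a"
    using assms by (intro mult_right_mono) auto
  finally show "phi s (a, b) < int s ^ Suc a"
    by simp
qed

lemma phi_inj:
  assumes "2 \<le> s" and "p \<in> Vset s" and "q \<in> Vset s" and "phi s p = phi s q"
  shows "p = q"
proof -
  obtain a b c d where p: "p = (a, b)" and q: "q = (c, d)"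
    by fastforce
  have not_shorter: "\<not> Suc a \<le> c" if "(a, b) \<in> Vset s" "(c, d) \<in> Vset s"
    and "phi s (a, b) = phi s (c, d)" for a b c d
  proof
    assume "Suc a \<le> c"
    then have "int s ^ Suc a \<le> int s ^ c"
      using assms(1) by (intro power_increasing) auto
    then show False
      using phi_bounds[OF assms(1)] that by (metis leD order.strict_trans2 order.trans)
  qed
  have "a = c"
    using not_shorter[of a b c d] not_shorter[of c d a b] assms(2-4) p q by auto
  then show ?thesis
    using assms(4) p q by (simp add: phi_def)
qed

lemma iota_phi:
  assumes "2 \<le> s" and "p \<in> Vset s"
  shows "iota s f (phi s p) = f p"
proof -
  have "(THE q. q \<in> Vset s \<and> phi s q = phi s p) = p"
    using assms phi_inj[OF assms(1)] by (intro the_equality) auto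
  then show ?thesis
    using assms unfolding iota_def by auto
qed

lemma iota_outside_range:
  assumes "\<not> (\<exists>p\<in>Vset s. phi s p = M)"
  shows "iota s f M = 0"
  using assms unfolding iota_def by auto

lemma iota_delta:
  assumes "2 \<le> s" and "r \<in> Vset s"
  shows "iota s (delta r) = delta (phi s r)"
proof
  fix M
  show "iota s (delta r) M = delta (phi s r) M"
  proof (cases "\<exists>p\<in>Vset s. phi s p = M")
    case True
    then obtain p where p: "p \<in> Vset s" and "phi s p = M"
      by blast
    then show ?thesis
      using iota_phi[OF assms(1) p, of "delta r"] phi_inj[OF assms(1) p assms(2)]
      by (auto simp: delta_def)
  next
    case False
    then show ?thesis
      using iota_outside_range[OF False] assms(2) by (auto simp: delta_def)
  qed
qed

lemma adj_iota_apply: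
  assumes "2 \<le> s" and "r \<in> Vset s"
  shows "adj (Vset s) UNIV (iota s) g r = g (phi s r)"
  using assms by (simp add: adj_apply_of_delta iota_delta)

lemma adj_iota_outside_Vset:
  assumes "r \<notin> Vset s"
  shows "adj (Vset s) UNIV (iota s) g r = 0"
  using assms by (simp add: adj_def)

subsection \<open>Compressing \<open>u_(n,x) u_(m,y)*\<close> to \<open>H\<close>\<close>

lemma phi_mod_div_pow:
  assumes "0 < s" and "n \<le> K"
  shows "phi s (K, Z) mod int s ^ n = Z mod int s ^ n"
    and "phi s (K, Z) div int s ^ n = phi s (K - n, Z div int s ^ n)"
proof -
  have "phi s (K, Z) = int s ^ n * int s ^ (K - n) + Z"
    using assms(2) by (simp add: phi_def flip: power_add)
  then show "phi s (K, Z) mod int s ^ n = Z mod int s ^ n"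
    and "phi s (K, Z) div int s ^ n = phi s (K - n, Z div int s ^ n)"
    using assms(1) by (simp_all add: phi_def)
qed

lemma phi_less_pow:
  assumes "2 \<le> s" and "(K, Z) \<in> Vset s" and "K < n"
  shows "phi s (K, Z) < int s ^ n"
proof -
  have "phi s (K, Z) < int s ^ Suc K"
    using phi_bounds(2)[OF assms(1,2)] .
  also have "\<dots> \<le> int s ^ n"
    using assms(1,3) by (intro power_increasing) auto
  finally show ?thesis .
qed

lemma TS_uword_adj_uword_apply:
  assumes "2 \<le> s" and "(n, x) \<in> Vset s" and "(m, y) \<in> Vset s" and "(K, Z) \<in> Vset s"
  shows "TS s (uword s n x \<circ> adj UNIV UNIV (uword s m y)) f (K, Z)
       = (Sword s n x \<circ> adj (Vset s) (Vset s) (Sword s m y)) f (K, Z)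
         + (if phi s (K, Z) = x then iota s f y else 0)"
proof -
  have s0: "0 < s"
    using assms(1) by simp
  let ?P = "phi s (K, Z)"
  have TS_apply: "TS s (uword s n x \<circ> adj UNIV UNIV (uword s m y)) f (K, Z)
      = (if ?P mod int s ^ n = x then iota s f (int s ^ m * (?P div int s ^ n) + y) else 0)"
    using assms uword_apply[OF s0, of x n] adj_uword_apply[OF s0, of y m]
    by (simp add: TS_def adj_iota_apply) (simp add: Vset_def)
  show ?thesis
  proof (cases "n \<le> K")
    case True
    have "(m + (K - n), int s ^ m * (Z div int s ^ n) + y) \<in> Vset s"
      using Vset_append_digits[OF s0] Vset_drop_digits[OF s0 assms(4) True] assms(3)
      by (simp add: Vset_def)
    moreover have "int s ^ m * (?P div int s ^ n) + y
                 = phi s (m + (K - n), int s ^ m * (Z div int s ^ n) + y)"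
      unfolding phi_mod_div_pow(2)[OF s0 True] by (simp add: phi_def power_add algebra_simps)
    ultimately have "iota s f (int s ^ m * (?P div int s ^ n) + y)
             = f (m + (K - n), int s ^ m * (Z div int s ^ n) + y)"
      using iota_phi[OF assms(1)] by simp
    moreover have "int s ^ n \<le> int s ^ K"
      using True assms(1) by (intro power_increasing) auto
    then have "?P \<noteq> x"
      using phi_bounds(1)[OF assms(1,4)] assms(2) by (auto simp: Vset_def)
    ultimately show ?thesis
      using TS_apply Sword_adj_Sword_apply[OF s0 assms(2-4)] phi_mod_div_pow(1)[OF s0 True] True
      by simp
  next
    case False
    then have "0 \<le> ?P" "?P < int s ^ n"
      using phi_less_pow[OF assms(1,4)] assms(4) by (auto simp: phi_def Vset_def)
    then show ?thesis
      using TS_apply Sword_adj_Sword_apply[OF s0 assms(2-4)] False by auto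
  qed
qed

lemma TS_uword_adj_uword:
  assumes "2 \<le> s" and "(n, x) \<in> Vset s" and "(m, y) \<in> Vset s"
  shows "TS s (uword s n x \<circ> adj UNIV UNIV (uword s m y)) f
       = (\<lambda>r. (Sword s n x \<circ> adj (Vset s) (Vset s) (Sword s m y)) f r
              + (if r \<in> Vset s \<and> phi s r = x then iota s f y else 0))"
proof
  fix r
  show "TS s (uword s n x \<circ> adj UNIV UNIV (uword s m y)) f r
      = (Sword s n x \<circ> adj (Vset s) (Vset s) (Sword s m y)) f r
        + (if r \<in> Vset s \<and> phi s r = x then iota s f y else 0)"
  proof (cases "r \<in> Vset s")
    case True
    then show ?thesis
      using TS_uword_adj_uword_apply[OF assms] by (cases r) simp
  next
    case False
    then show ?thesis
      using Sword_outside_Vset[OF _ False] by (simp add: TS_def adj_iota_outside_Vset adj_def)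
  qed
qed

theorem proposition6p4:
  fixes s n m :: nat and x y :: int
  assumes "s \<ge> 2" and "(n, x) \<in> Vset s" and "(m, y) \<in> Vset s"
  shows "(\<forall>j x' l y'. (j, x') \<in> Vset s \<and> (l, y') \<in> Vset s
            \<and> x = phi s (j, x') \<and> y = phi s (l, y') \<longrightarrow>
            (\<forall>f \<in> l2 (Vset s).
               TS s (uword s n x \<circ> adj UNIV UNIV (uword s m y)) f
               = (\<lambda>r. (Sword s n x \<circ> adj (Vset s) (Vset s) (Sword s m y)) f r
                      + Cop (j, x') (l, y') f r)))
       \<and> ((\<not> (\<exists>p \<in> Vset s. phi s p = x) \<or> \<not> (\<exists>p \<in> Vset s. phi s p = y)) \<longrightarrow>
            (\<forall>f \<in> l2 (Vset s).
               TS s (uword s n x \<circ> adj UNIV UNIV (uword s m y)) f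
               = (Sword s n x \<circ> adj (Vset s) (Vset s) (Sword s m y)) f))"
proof (intro conjI allI impI ballI)
  fix j x' l y' f
  assume "(j, x') \<in> Vset s \<and> (l, y') \<in> Vset s \<and> x = phi s (j, x') \<and> y = phi s (l, y')"
  then have "(if r \<in> Vset s \<and> phi s r = x then iota s f y else 0) = Cop (j, x') (l, y') f r" for r
    using phi_inj[OF assms(1), of r "(j, x')"] iota_phi[OF assms(1)] by (auto simp: Cop_def)
  then show "TS s (uword s n x \<circ> adj UNIV UNIV (uword s m y)) f
       = (\<lambda>r. (Sword s n x \<circ> adj (Vset s) (Vset s) (Sword s m y)) f r + Cop (j, x') (l, y') f r)"
    by (simp add: TS_uword_adj_uword[OF assms])
next
  fix f
  assume "\<not> (\<exists>p \<in> Vset s. phi s p = x) \<or> \<not> (\<exists>p \<in> Vset s. phi s p = y)"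
  then have "(if r \<in> Vset s \<and> phi s r = x then iota s f y else 0) = 0" for r
    using iota_outside_range[of s y f] by auto
  then show "TS s (uword s n x \<circ> adj UNIV UNIV (uword s m y)) f
       = (Sword s n x \<circ> adj (Vset s) (Vset s) (Sword s m y)) f"
    by (simp add: TS_uword_adj_uword[OF assms])
qed

end
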